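(* Let $\mathcal Y\subset\mathbb R^d$ be finite with no element a strict convex combination of others, $\kappa>0$, $\gamma_i=(c(y,\xi_i))_{y\in\mathcal Y}$ for $i\in[N]$, and $\Omega_\Delta$ a proper l.s.c. convex function with domain $\Delta^{\mathcal Y}$ whose restriction to the affine hull of $\Delta^{\mathcal Y}$ is Legendre-type. For $q_\otimes=(q_i)_{i\in[N]}\in\Delta_\otimes$ let $\bar{\mathcal S}_{\Omega_\Delta,N}(q_\otimes):=\inf_{s_\otimes\in\bar S_\otimes}\mathcal S_N(s_\otimes,q_\otimes)$. Then $$\bar{\mathcal S}_{\Omega_\Delta,N}(q_\otimes)=\frac1N\sum_{i=1}^N\langle\gamma_i|q_i\rangle+\frac\kappa N\Big[\sum_{i=1}^N\Omega_\Delta(q_i)-N\,\Omega_\Delta\Big(\frac1N\sum_{i=1}^Nq_i\Big)\Big].$$ Moreover, if $\Psi_\Delta$ is a Legendre-type function with $\Omega_\Delta=\Psi_\Delta+\mathbb I_{\Delta^{\mathcal Y}}$, then $\bar{\mathcal S}_{\Omega_\Delta,N}$ coincides on $\Delta_\otimes$ with $$\bar{\mathcal S}_{\Psi_\Delta,N}(q_\otimes):=\frac1N\sum_{i=1}^N\langle\gamma_i|q_i\rangle+\frac\kappa N\Big[\sum_{i=1}^N\Psi_\Delta(q_i)-N\,\Psi_\Delta\Big(\frac1N\sum_{i=1}^Nq_i\Big)\Big],$$ and $\bar{\mathcal S}_{\Psi_\Delta,N}$ is convex if the function $q_\otimes\mapsto\frac1N\sum_i\Psi_\Delta(q_i)-\Psi_\Delta(\frac1N\sum_iq_i)$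 is convex; this latter function is non-negative.
   Context: $\Delta^{\mathcal Y}$ is the probability simplex indexed by $\mathcal Y$, $\Delta_\otimes=(\Delta^{\mathcal Y})^N$, $\bar S_\otimes=\{(s_1,\dots,s_N)\in(\mathbb R^{\mathcal Y})^N:s_1=\dots=s_N\}$, $\mathbb I_A$ is the indicator of $A$. Legendre-type: strictly convex on the interior of the domain and essentially smooth (w.r.t. the affine hull's metric for restrictions). $\mathcal L_{\Omega_\Delta}(s;q)=\Omega_\Delta(q)+\Omega_\Delta^*(s)-\langle s|q\rangle$, and $\mathcal S_N(s_\otimes,q_\otimes)=\frac1N\sum_{i=1}^N\big[\langle\gamma_i|q_i\rangle+\kappa\mathcal L_{\Omega_\Delta}(s_i;q_i)\big]$. *)

theory Defs
  imports "HOL-Analysis.Analysis" "HOL-Library.Extended_Real"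
begin

definition dom_e :: "('a \<Rightarrow> ereal) \<Rightarrow> 'a set" where
  "dom_e f = {x. f x < \<infinity>}"

definition proper_fun :: "('a \<Rightarrow> ereal) \<Rightarrow> bool" where
  "proper_fun f \<longleftrightarrow> (\<forall>x. f x \<noteq> -\<infinity>) \<and> (\<exists>x. f x < \<infinity>)"

definition ext_convex_on :: "'a::real_vector set \<Rightarrow> ('a \<Rightarrow> ereal) \<Rightarrow> bool" where
  "ext_convex_on D f \<longleftrightarrow> convex D \<and> (\<forall>x\<in>D. \<forall>y\<in>D. \<forall>t::real. 0 < t \<longrightarrow> t < 1 \<longrightarrow>
      f ((1 - t) *\<^sub>R x + t *\<^sub>R y) \<le> ereal (1 - t) * f x + ereal t * f y)"

definition lsc_fun :: "('a::topological_space \<Rightarrow> ereal) \<Rightarrow> bool" where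
  "lsc_fun f \<longleftrightarrow> (\<forall>x X. X \<longlonglongrightarrow> x \<longrightarrow> f x \<le> liminf (\<lambda>k. f (X k)))"

text \<open>Interior of the domain relative to an affine set A (= relative interior when
  A is the affine hull of the domain, = interior when A = UNIV).\<close>
definition int_rel :: "'a::euclidean_space set \<Rightarrow> ('a \<Rightarrow> ereal) \<Rightarrow> 'a set" where
  "int_rel A f = {x \<in> A. \<exists>e>0. ball x e \<inter> A \<subseteq> dom_e f}"

text \<open>Legendre-type (Rockafellar, Sect. 26) for the restriction of f to the affine set A
  (with dom f contained in A): closed proper convex, essentially smooth and strictly
  convex on the (relative) interior of its domain; derivatives and their norms are
  taken with respect to the metric of A, i.e. in directions of the subspace parallel to A.\<close>
definition legendre_on :: "'a::euclidean_space set \<Rightarrow> ('a \<Rightarrow> ereal) \<Rightarrow> bool" where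
  "legendre_on A f \<longleftrightarrow>
     affine A \<and> dom_e f \<subseteq> A \<and> proper_fun f \<and> lsc_fun f \<and> ext_convex_on UNIV f \<and>
     (let C = int_rel A f; L = {u - w | u w. u \<in> A \<and> w \<in> A};
          g = (\<lambda>x. real_of_ereal (f x)) in
       C \<noteq> {} \<and>
       (\<forall>x\<in>C. g differentiable (at x within A)) \<and>
       (\<forall>X x. (\<forall>k. X k \<in> C) \<longrightarrow> X \<longlonglongrightarrow> x \<longrightarrow> x \<in> closure C - C \<longrightarrow>
           (\<forall>M. \<forall>\<^sub>F k in sequentially. \<forall>D. (g has_derivative D) (at (X k) within A) \<longrightarrow>
               (\<exists>v\<in>L. norm v = 1 \<and> D v > M))) \<and>
       (\<forall>x\<in>C. \<forall>y\<in>C. \<forall>t::real. x \<noteq> y \<longrightarrow> 0 < t \<longrightarrow> t < 1 \<longrightarrow>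
           f ((1 - t) *\<^sub>R x + t *\<^sub>R y) < ereal (1 - t) * f x + ereal t * f y))"

definition ind_fun :: "'a set \<Rightarrow> 'a \<Rightarrow> ereal" where
  "ind_fun A x = (if x \<in> A then 0 else \<infinity>)"

definition conj_fun :: "('a::real_inner \<Rightarrow> ereal) \<Rightarrow> 'a \<Rightarrow> ereal" where
  "conj_fun f s = (SUP q. ereal (s \<bullet> q) - f q)"

definition prob_simplex :: "(real ^ 'y::finite) set" where
  "prob_simplex = {q. (\<forall>y. 0 \<le> q $ y) \<and> (\<Sum>y\<in>UNIV. q $ y) = 1}"

definition FY_loss :: "(real ^ 'y::finite \<Rightarrow> ereal) \<Rightarrow> real ^ 'y \<Rightarrow> real ^ 'y \<Rightarrow> ereal" where
  "FY_loss \<Omega> s q = \<Omega> q + conj_fun \<Omega> s - ereal (s \<bullet> q)"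

text \<open>S_N(s_\<otimes>, q_\<otimes>), with [N] represented by the finite type 'n, N = CARD('n).\<close>
definition S_N :: "(real ^ 'y::finite \<Rightarrow> ereal) \<Rightarrow> real \<Rightarrow> ('n::finite \<Rightarrow> real ^ 'y)
     \<Rightarrow> (real ^ 'y) ^ 'n \<Rightarrow> (real ^ 'y) ^ 'n \<Rightarrow> ereal" where
  "S_N \<Omega> \<kappa> \<gamma> s q = ereal (1 / real CARD('n)) *
     (\<Sum>i\<in>UNIV. ereal (\<gamma> i \<bullet> q $ i) + ereal \<kappa> * FY_loss \<Omega> (s $ i) (q $ i))"

definition consensus :: "((real ^ 'y::finite) ^ 'n::finite) set" where
  "consensus = {s. \<forall>i j. s $ i = s $ j}"

definition Sbar_inf :: "(real ^ 'y::finite \<Rightarrow> ereal) \<Rightarrow> real \<Rightarrow> ('n::finite \<Rightarrow> real ^ 'y)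
     \<Rightarrow> (real ^ 'y) ^ 'n \<Rightarrow> ereal" where
  "Sbar_inf \<Omega> \<kappa> \<gamma> q = (INF s\<in>consensus. S_N \<Omega> \<kappa> \<gamma> s q)"

definition Sbar_formula :: "(real ^ 'y::finite \<Rightarrow> ereal) \<Rightarrow> real \<Rightarrow> ('n::finite \<Rightarrow> real ^ 'y)
     \<Rightarrow> (real ^ 'y) ^ 'n \<Rightarrow> ereal" where
  "Sbar_formula F \<kappa> \<gamma> q =
     ereal (1 / real CARD('n) * (\<Sum>i\<in>UNIV. \<gamma> i \<bullet> q $ i)) +
     ereal (\<kappa> / real CARD('n)) *
       ((\<Sum>i\<in>UNIV. F (q $ i)) -
        ereal (real CARD('n)) * F ((1 / real CARD('n)) *\<^sub>R (\<Sum>i\<in>UNIV. q $ i)))"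

definition jensen_gap :: "(real ^ 'y::finite \<Rightarrow> ereal) \<Rightarrow> (real ^ 'y) ^ 'n::finite \<Rightarrow> ereal" where
  "jensen_gap F q = ereal (1 / real CARD('n)) * (\<Sum>i\<in>UNIV. F (q $ i)) -
     F ((1 / real CARD('n)) *\<^sub>R (\<Sum>i\<in>UNIV. q $ i))"

end

theory Submission
  imports Defs
begin

(* On the consensus set all s_i equal a single s, and S_N becomes an affine function of
   Omega*(s) - <s|qbar>, where qbar is the mean of the q_i.  Its infimum over s is
   -Omega**(qbar) = -Omega(qbar).  The lower bound is the Fenchel-Young inequality.  For the
   upper bound take the points x_t = qbar + t (x - qbar) towards a relative-interior point x:
   the Legendre hypothesis provides a gradient s_t at x_t, for which Fenchel-Young is an
   equality, and convexity together with lower semicontinuity makes Omega continuous along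
   the segment as t -> 0.  The statements about Psi follow because Psi = Omega on the simplex,
   which contains qbar; the closed form is then a linear function plus kappa times the Jensen
   gap, and the gap is non-negative by Jensen's inequality. *)

lemma INF_ereal_affine:
  assumes "I \<noteq> {}" "0 < k"
  shows "(INF i\<in>I. ereal c + ereal k * f i) = ereal c + ereal k * (INF i\<in>I. f i)"
proof -
  have "continuous (at_right (INF i\<in>I. f i)) (\<lambda>x. ereal k * x + ereal c)"
    unfolding continuous_within by (intro tendsto_intros) auto
  moreover have "mono (\<lambda>x. ereal k * x + ereal c)"
    using assms(2) by (auto simp: mono_def intro!: add_right_mono ereal_mult_left_mono)
  ultimately show ?thesis
    using continuous_at_Inf_mono[of "\<lambda>x. ereal k * x + ereal c" "f ` I"] assms(1)
    by (simp add: image_comp add.commute)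
qed

lemma linear_imp_convex_on: "convex S \<Longrightarrow> linear f \<Longrightarrow> convex_on S f"
  by (rule convex_onI) (simp_all add: linear_add linear_scale)

lemma convex_on_has_derivative_within_affine_le:
  fixes g :: "'a::real_normed_vector \<Rightarrow> real"
  assumes g: "convex_on S g" and "affine A" and x: "x \<in> S" "x \<in> A" and y: "y \<in> S" "y \<in> A"
    and D: "(g has_derivative D) (at x within A)"
  shows "g x + D (y - x) \<le> g y"
proof -
  define p where "p = (\<lambda>t::real. x + t *\<^sub>R (y - x))"
  have p_affine: "p t = (1 - t) *\<^sub>R x + t *\<^sub>R y" for t
    unfolding p_def by (simp add: algebra_simps)
  have "range p \<subseteq> A"
    using \<open>affine A\<close> x y unfolding affine_def p_affine by auto
  then have "(g has_derivative D) (at (p 0) within range p)"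
    using has_derivative_subset[OF D] by (simp add: p_def)
  moreover have "(p has_derivative (\<lambda>t. t *\<^sub>R (y - x))) (at 0)"
    unfolding p_def by (auto intro!: derivative_eq_intros)
  ultimately have "((g \<circ> p) has_derivative (\<lambda>t. D (t *\<^sub>R (y - x)))) (at 0)"
    using diff_chain_within[of p _ 0 UNIV g D] by (simp add: o_def)
  moreover have "(\<lambda>t. D (t *\<^sub>R (y - x))) = (*) (D (y - x))"
    using linear_scale[OF has_derivative_linear[OF D]] by (simp add: fun_eq_iff)
  ultimately have "((g \<circ> p) has_field_derivative D (y - x)) (at 0)"
    unfolding has_field_derivative_def by simp
  then have "((\<lambda>t. (g (p t) - g (p 0)) / t) \<longlongrightarrow> D (y - x)) (at_right 0)"
    unfolding has_field_derivative_iff by (auto intro: tendsto_within_subset)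
  moreover have "\<forall>\<^sub>F t in at_right 0. (g (p t) - g (p 0)) / t \<le> g y - g x"
    using eventually_at_right_real[OF zero_less_one]
  proof eventually_elim
    case (elim t)
    then have "g (p t) \<le> (1 - t) * g x + t * g y"
      using convex_onD[OF g, of t x y] x y by (simp add: p_affine)
    then show ?case
      using elim by (simp add: p_def divide_simps algebra_simps)
  qed
  ultimately have "D (y - x) \<le> g y - g x"
    by (rule tendsto_upperbound) simp
  then show ?thesis by simp
qed

lemma proper_fun_dom_e_eq_ereal:
  assumes "proper_fun F" "x \<in> dom_e F"
  shows "F x = ereal (real_of_ereal (F x))"
  using assms unfolding proper_fun_def dom_e_def by (cases "F x") auto

lemma ext_convex_on_cong:
  assumes "\<And>x. x \<in> D \<Longrightarrow> f x = g x"
  shows "ext_convex_on D f \<longleftrightarrow> ext_convex_on D g"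
proof -
  have "(1 - t) *\<^sub>R x + t *\<^sub>R y \<in> D" if "convex D" "x \<in> D" "y \<in> D" "0 < t" "t < 1" for x y t
    using that convex_alt by fastforce
  then show ?thesis using assms unfolding ext_convex_on_def by auto
qed

lemma ext_convex_on_ereal_iff: "ext_convex_on D (\<lambda>x. ereal (f x)) \<longleftrightarrow> convex_on D f"
  unfolding ext_convex_on_def
  by (auto intro: convex_onI dest: convex_on_imp_convex simp: convex_onD)

lemma ext_convex_on_UNIV_convex_on_dom_e:
  fixes F :: "'a::real_vector \<Rightarrow> ereal"
  assumes "ext_convex_on UNIV F" "proper_fun F"
  shows "convex_on (dom_e F) (\<lambda>x. real_of_ereal (F x))"
proof -
  have le: "F ((1 - t) *\<^sub>R x + t *\<^sub>R y)
      \<le> ereal ((1 - t) * real_of_ereal (F x) + t * real_of_ereal (F y))"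
    if xy: "x \<in> dom_e F" "y \<in> dom_e F" and t: "0 < t" "t < 1" for x y t
  proof -
    obtain a b where "F x = ereal a" "F y = ereal b"
      using proper_fun_dom_e_eq_ereal[OF assms(2)] xy by metis
    moreover have "F ((1 - t) *\<^sub>R x + t *\<^sub>R y) \<le> ereal (1 - t) * F x + ereal t * F y"
      using assms(1) t unfolding ext_convex_on_def by blast
    ultimately show ?thesis by simp
  qed
  have mem: "(1 - t) *\<^sub>R x + t *\<^sub>R y \<in> dom_e F"
    if "x \<in> dom_e F" "y \<in> dom_e F" "0 < t" "t < 1" for x y t
    using le[OF that] by (auto simp: dom_e_def intro: le_less_trans)
  have "convex (dom_e F)"
    unfolding convex_alt
  proof (intro ballI allI impI)
    fix x y and u :: real assume "x \<in> dom_e F" "y \<in> dom_e F" "0 \<le> u \<and> u \<le> 1"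
    then show "(1 - u) *\<^sub>R x + u *\<^sub>R y \<in> dom_e F"
      using mem[of x y u] by (cases "u = 0 \<or> u = 1") auto
  qed
  then show ?thesis
  proof (rule convex_onI[rotated])
    fix t :: real and x y assume "0 < t" "t < 1" "x \<in> dom_e F" "y \<in> dom_e F"
    then show "real_of_ereal (F ((1 - t) *\<^sub>R x + t *\<^sub>R y))
        \<le> (1 - t) * real_of_ereal (F x) + t * real_of_ereal (F y)"
      using le proper_fun_dom_e_eq_ereal[OF assms(2) mem] by (metis ereal_less_eq(3))
  qed
qed

lemma ext_convex_on_UNIV_convex_dom_e:
  fixes F :: "'a::real_vector \<Rightarrow> ereal"
  assumes "ext_convex_on UNIV F" "proper_fun F"
  shows "convex (dom_e F)"
  using convex_on_imp_convex[OF ext_convex_on_UNIV_convex_on_dom_e[OF assms]] .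

lemma lsc_convex_tendsto_along_segment:
  fixes F :: "'a::real_normed_vector \<Rightarrow> ereal"
  assumes pr: "proper_fun F" and lsc: "lsc_fun F" and cv: "ext_convex_on UNIV F"
    and p: "p \<in> dom_e F" and x: "x \<in> dom_e F"
  shows "((\<lambda>t. real_of_ereal (F (p + t *\<^sub>R (x - p)))) \<longlongrightarrow> real_of_ereal (F p)) (at_right 0)"
proof (rule order_tendstoI)
  let ?g = "\<lambda>z. real_of_ereal (F z)"
  let ?X = "\<lambda>t. p + t *\<^sub>R (x - p)"
  have g: "convex_on (dom_e F) ?g"
    by (rule ext_convex_on_UNIV_convex_on_dom_e[OF cv pr])
  have X_affine: "?X t = (1 - t) *\<^sub>R p + t *\<^sub>R x" for t
    by (simp add: algebra_simps)
  have X_dom: "?X t \<in> dom_e F" if "0 \<le> t" "t \<le> 1" for t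
    using convex_on_imp_convex[OF g] p x that unfolding X_affine convex_alt by blast
  fix a
  assume "a < ?g p"
  show "\<forall>\<^sub>F t in at_right 0. a < ?g (?X t)"
  proof (rule sequentially_imp_eventually_at_right[OF zero_less_one])
    fix f :: "nat \<Rightarrow> real" assume f: "\<And>n. 0 < f n" "\<And>n. f n < 1" "f \<longlonglongrightarrow> 0"
    have "(\<lambda>n. ?X (f n)) \<longlonglongrightarrow> ?X 0"
      by (intro tendsto_intros f(3))
    then have "F p \<le> liminf (\<lambda>n. F (?X (f n)))"
      using lsc unfolding lsc_fun_def by simp
    moreover have "ereal a < F p"
      using \<open>a < ?g p\<close> by (subst proper_fun_dom_e_eq_ereal[OF pr p]) simp
    ultimately have "\<forall>\<^sub>F n in sequentially. ereal a < F (?X (f n))"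
      by (intro less_LiminfD) simp
    then show "\<forall>\<^sub>F n in sequentially. a < ?g (?X (f n))"
    proof eventually_elim
      case (elim n)
      obtain r where "F (?X (f n)) = ereal r"
        using proper_fun_dom_e_eq_ereal[OF pr X_dom] f(1,2)[of n] by (meson less_imp_le)
      then show ?case using elim by simp
    qed
  qed
next
  let ?g = "\<lambda>z. real_of_ereal (F z)"
  fix a
  assume "?g p < a"
  have "((\<lambda>t. (1 - t) * ?g p + t * ?g x) \<longlongrightarrow> (1 - 0) * ?g p + 0 * ?g x) (at_right 0)"
    by (intro tendsto_intros)
  then have "\<forall>\<^sub>F t in at_right 0. (1 - t) * ?g p + t * ?g x < a"
    using \<open>?g p < a\<close> by (intro order_tendstoD(2)) auto
  with eventually_at_right_real[OF zero_less_one]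
  show "\<forall>\<^sub>F t in at_right 0. ?g (p + t *\<^sub>R (x - p)) < a"
  proof eventually_elim
    case (elim t)
    have "p + t *\<^sub>R (x - p) = (1 - t) *\<^sub>R p + t *\<^sub>R x"
      by (simp add: algebra_simps)
    then show ?case
      using elim convex_onD[OF ext_convex_on_UNIV_convex_on_dom_e[OF cv pr], of t p x] p x by auto
  qed
qed

lemma int_rel_subset_dom_e: "int_rel A F \<subseteq> dom_e F"
  unfolding int_rel_def by force

lemma int_rel_affine_hull_dom_e:
  fixes F :: "'a::euclidean_space \<Rightarrow> ereal"
  shows "int_rel (affine hull (dom_e F)) F = rel_interior (dom_e F)"
  unfolding int_rel_def using mem_rel_interior_ball hull_inc by fastforce

lemma legendre_on_subgradient:
  fixes F :: "'a::euclidean_space \<Rightarrow> ereal"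
  assumes leg: "legendre_on A F" and x: "x \<in> int_rel A F"
  obtains s where "\<And>y. y \<in> dom_e F \<Longrightarrow> real_of_ereal (F x) + s \<bullet> (y - x) \<le> real_of_ereal (F y)"
proof -
  have "affine A" "dom_e F \<subseteq> A" "proper_fun F" "ext_convex_on UNIV F"
    and "(\<lambda>z. real_of_ereal (F z)) differentiable (at x within A)"
    using leg x unfolding legendre_on_def Let_def by auto
  then obtain D where D: "((\<lambda>z. real_of_ereal (F z)) has_derivative D) (at x within A)"
    unfolding differentiable_def by blast
  have "adjoint D 1 \<bullet> v = D v" for v
    using adjoint_clauses(2)[OF has_derivative_linear[OF D]] by simp
  moreover have "x \<in> dom_e F" using x int_rel_subset_dom_e by blast
  ultimately have "real_of_ereal (F x) + adjoint D 1 \<bullet> (y - x) \<le> real_of_ereal (F y)"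
    if "y \<in> dom_e F" for y
    using convex_on_has_derivative_within_affine_le[OF
        ext_convex_on_UNIV_convex_on_dom_e[OF \<open>ext_convex_on UNIV F\<close> \<open>proper_fun F\<close>] \<open>affine A\<close> _ _ _ _ D]
      that \<open>dom_e F \<subseteq> A\<close> by auto
  then show ?thesis using that by blast
qed

lemma conj_fun_ge: "ereal (s \<bullet> q) - F q \<le> conj_fun F s"
  unfolding conj_fun_def by (rule SUP_upper) simp

lemma conj_fun_eq_at_subgradient:
  assumes "proper_fun F" "x \<in> dom_e F"
    and sub: "\<And>y. y \<in> dom_e F \<Longrightarrow> real_of_ereal (F x) + s \<bullet> (y - x) \<le> real_of_ereal (F y)"
  shows "conj_fun F s = ereal (s \<bullet> x - real_of_ereal (F x))"
proof (rule antisym)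
  show "conj_fun F s \<le> ereal (s \<bullet> x - real_of_ereal (F x))"
    unfolding conj_fun_def
  proof (rule SUP_least)
    fix y show "ereal (s \<bullet> y) - F y \<le> ereal (s \<bullet> x - real_of_ereal (F x))"
    proof (cases "y \<in> dom_e F")
      case True
      have "s \<bullet> y - real_of_ereal (F y) \<le> s \<bullet> x - real_of_ereal (F x)"
        using sub[OF True] by (simp add: inner_diff_right)
      then show ?thesis
        by (subst proper_fun_dom_e_eq_ereal[OF assms(1) True]) simp
    qed (simp add: dom_e_def)
  qed
  show "ereal (s \<bullet> x - real_of_ereal (F x)) \<le> conj_fun F s"
    using conj_fun_ge[of s x F] by (subst (asm) proper_fun_dom_e_eq_ereal[OF assms(1,2)]) simp
qed

lemma legendre_on_conj_fun_segment_le: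
  fixes F :: "'a::euclidean_space \<Rightarrow> ereal"
  assumes leg: "legendre_on (affine hull (dom_e F)) F" and p: "p \<in> dom_e F"
    and x: "x \<in> rel_interior (dom_e F)" and t: "0 < t" "t < 1"
  obtains s where "conj_fun F s - ereal (s \<bullet> p)
    \<le> ereal ((t * real_of_ereal (F x) - real_of_ereal (F (p + t *\<^sub>R (x - p)))) / (1 - t))"
proof -
  let ?g = "\<lambda>z. real_of_ereal (F z)"
  let ?X = "p + t *\<^sub>R (x - p)"
  have pr: "proper_fun F" and cv: "ext_convex_on UNIV F"
    using leg unfolding legendre_on_def by auto
  have "?X \<in> rel_interior (dom_e F)"
    using rel_interior_convex_shrink[OF _ x p, of t] t
      ext_convex_on_UNIV_convex_dom_e[OF cv pr]
    by (simp add: algebra_simps)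
  then obtain s where s: "\<And>y. y \<in> dom_e F \<Longrightarrow> ?g ?X + s \<bullet> (y - ?X) \<le> ?g y"
    using legendre_on_subgradient[OF leg] int_rel_affine_hull_dom_e by blast
  have "?X \<in> dom_e F"
    using \<open>?X \<in> rel_interior (dom_e F)\<close> rel_interior_subset by blast
  then have conj: "conj_fun F s - ereal (s \<bullet> p) = ereal (t * (s \<bullet> (x - p)) - ?g ?X)"
    by (simp add: conj_fun_eq_at_subgradient[OF pr _ s] algebra_simps inner_diff_right)
  have "x \<in> dom_e F"
    using x rel_interior_subset by blast
  then have "?g ?X + (1 - t) * (s \<bullet> (x - p)) \<le> ?g x"
    using s by (simp add: algebra_simps inner_diff_right)
  then have "t * (?g ?X + (1 - t) * (s \<bullet> (x - p))) \<le> t * ?g x"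
    using t by (intro mult_left_mono) auto
  then have "(1 - t) * (t * (s \<bullet> (x - p)) - ?g ?X) \<le> t * ?g x - ?g ?X"
    by (simp add: algebra_simps)
  then have "t * (s \<bullet> (x - p)) - ?g ?X \<le> (t * ?g x - ?g ?X) / (1 - t)"
    using t by (simp add: field_simps)
  then show ?thesis
    using that[of s] unfolding conj by simp
qed

lemma legendre_on_INF_conj_fun:
  fixes F :: "'a::euclidean_space \<Rightarrow> ereal"
  assumes leg: "legendre_on (affine hull (dom_e F)) F" and p: "p \<in> dom_e F"
  shows "(INF s. conj_fun F s - ereal (s \<bullet> p)) = - F p"
proof (rule antisym)
  have pr: "proper_fun F" and lsc: "lsc_fun F" and cv: "ext_convex_on UNIV F"
    and "rel_interior (dom_e F) \<noteq> {}"
    using leg unfolding legendre_on_def Let_def int_rel_affine_hull_dom_e by auto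
  then obtain x where x: "x \<in> rel_interior (dom_e F)" by blast
  let ?g = "\<lambda>z. real_of_ereal (F z)"
  let ?h = "\<lambda>t. (t * ?g x - ?g (p + t *\<^sub>R (x - p))) / (1 - t)"
  have "x \<in> dom_e F"
    using x rel_interior_subset by blast
  then have "(?h \<longlongrightarrow> (0 * ?g x - ?g p) / (1 - 0)) (at_right 0)"
    by (intro tendsto_intros lsc_convex_tendsto_along_segment[OF pr lsc cv p]) auto
  then have "((\<lambda>t. ereal (?h t)) \<longlongrightarrow> ereal (- ?g p)) (at_right 0)"
    using tendsto_ereal by fastforce
  moreover have "\<forall>\<^sub>F t in at_right 0. (INF s. conj_fun F s - ereal (s \<bullet> p)) \<le> ereal (?h t)"
    using eventually_at_right_real[OF zero_less_one]
  proof eventually_elim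
    case (elim t)
    then obtain s where "conj_fun F s - ereal (s \<bullet> p) \<le> ereal (?h t)"
      using legendre_on_conj_fun_segment_le[OF leg p x] by auto
    then show ?case
      by (meson INF_lower UNIV_I order_trans)
  qed
  ultimately have "(INF s. conj_fun F s - ereal (s \<bullet> p)) \<le> ereal (- ?g p)"
    by (rule tendsto_lowerbound) simp
  then show "(INF s. conj_fun F s - ereal (s \<bullet> p)) \<le> - F p"
    by (subst proper_fun_dom_e_eq_ereal[OF pr p]) simp
next
  show "- F p \<le> (INF s. conj_fun F s - ereal (s \<bullet> p))"
  proof (rule INF_greatest)
    fix s
    have "ereal (s \<bullet> p) - F p \<le> conj_fun F s"
      by (rule conj_fun_ge)
    then show "- F p \<le> conj_fun F s - ereal (s \<bullet> p)"
      by (cases "F p"; cases "conj_fun F s") auto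
  qed
qed

definition tuple_mean :: "'a::real_vector ^ 'n::finite \<Rightarrow> 'a" where
  "tuple_mean q = (1 / real CARD('n)) *\<^sub>R (\<Sum>i\<in>UNIV. q $ i)"

lemma tuple_mean_in_convex:
  fixes q :: "'a::real_vector ^ 'n::finite"
  assumes "convex S" "\<And>i. q $ i \<in> S"
  shows "tuple_mean q \<in> S"
  unfolding tuple_mean_def scaleR_sum_right by (rule convex_sum) (use assms in auto)

lemma convex_on_tuple_mean_le:
  fixes q :: "'a::real_vector ^ 'n::finite"
  assumes "convex_on S f" "\<And>i. q $ i \<in> S"
  shows "f (tuple_mean q) \<le> (1 / real CARD('n)) * (\<Sum>i\<in>UNIV. f (q $ i))"
  unfolding tuple_mean_def scaleR_sum_right sum_distrib_left
  by (rule convex_on_sum) (use assms in auto)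

lemma Sbar_formula_eq_ereal:
  fixes F :: "real ^ 'y::finite \<Rightarrow> ereal" and q :: "(real ^ 'y) ^ 'n::finite"
  assumes "proper_fun F" "\<And>i. q $ i \<in> dom_e F" "tuple_mean q \<in> dom_e F"
  shows "Sbar_formula F \<kappa> \<gamma> q = ereal ((1 / real CARD('n)) * (\<Sum>i\<in>UNIV. \<gamma> i \<bullet> q $ i)
    + \<kappa> * ((1 / real CARD('n)) * (\<Sum>i\<in>UNIV. real_of_ereal (F (q $ i))) - real_of_ereal (F (tuple_mean q))))"
proof -
  have "(\<Sum>i\<in>UNIV. F (q $ i)) = ereal (\<Sum>i\<in>UNIV. real_of_ereal (F (q $ i)))"
    using proper_fun_dom_e_eq_ereal[OF assms(1,2)] by (simp add: sum_ereal[symmetric] del: sum_ereal)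
  moreover obtain b where "F (tuple_mean q) = ereal b"
    using proper_fun_dom_e_eq_ereal[OF assms(1,3)] by blast
  ultimately show ?thesis
    unfolding Sbar_formula_def tuple_mean_def[symmetric]
    by (simp add: field_simps)
qed

lemma Sbar_formula_cong:
  assumes "\<And>i. F (q $ i) = G (q $ i)" "F (tuple_mean q) = G (tuple_mean q)"
  shows "Sbar_formula F \<kappa> \<gamma> q = Sbar_formula G \<kappa> \<gamma> q"
  using assms unfolding Sbar_formula_def tuple_mean_def[symmetric] by simp

lemma jensen_gap_eq_ereal:
  fixes F :: "real ^ 'y::finite \<Rightarrow> ereal" and q :: "(real ^ 'y) ^ 'n::finite"
  assumes "proper_fun F" "\<And>i. q $ i \<in> dom_e F" "tuple_mean q \<in> dom_e F"
  shows "jensen_gap F q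
    = ereal ((1 / real CARD('n)) * (\<Sum>i\<in>UNIV. real_of_ereal (F (q $ i))) - real_of_ereal (F (tuple_mean q)))"
proof -
  have "(\<Sum>i\<in>UNIV. F (q $ i)) = ereal (\<Sum>i\<in>UNIV. real_of_ereal (F (q $ i)))"
    using proper_fun_dom_e_eq_ereal[OF assms(1,2)] by (simp add: sum_ereal[symmetric] del: sum_ereal)
  moreover obtain b where "F (tuple_mean q) = ereal b"
    using proper_fun_dom_e_eq_ereal[OF assms(1,3)] by blast
  ultimately show ?thesis
    unfolding jensen_gap_def tuple_mean_def[symmetric] by simp
qed

lemma consensus_eq_range: "consensus = range (\<lambda>s. \<chi> i. s)"
  unfolding consensus_def by (force simp: vec_eq_iff)

lemma S_N_consensus:
  fixes F :: "real ^ 'y::finite \<Rightarrow> ereal" and q :: "(real ^ 'y) ^ 'n::finite"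
  assumes pr: "proper_fun F" and q: "\<And>i. q $ i \<in> dom_e F" and "0 < \<kappa>"
  shows "S_N F \<kappa> \<gamma> (\<chi> i. s) q
    = ereal ((1 / real CARD('n)) * (\<Sum>i\<in>UNIV. \<gamma> i \<bullet> q $ i)
        + \<kappa> * ((1 / real CARD('n)) * (\<Sum>i\<in>UNIV. real_of_ereal (F (q $ i)))))
      + ereal \<kappa> * (conj_fun F s - ereal (s \<bullet> tuple_mean q))"
proof -
  let ?N = "real CARD('n)"
  define g where "g i = real_of_ereal (F (q $ i))" for i
  have F_q: "F (q $ i) = ereal (g i)" for i
    using proper_fun_dom_e_eq_ereal[OF pr q] unfolding g_def .
  have "ereal (s \<bullet> q $ i - g i) \<le> conj_fun F s" for i
    using conj_fun_ge[of s "q $ i" F] unfolding F_q by simp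
  then have "conj_fun F s \<noteq> -\<infinity>"
    by (metis ereal_infty_less_eq(2) MInfty_neq_ereal(1))
  then consider r where "conj_fun F s = ereal r" | "conj_fun F s = \<infinity>"
    by (cases "conj_fun F s") auto
  then show ?thesis
  proof cases
    case 1
    have "ereal (\<gamma> i \<bullet> q $ i) + ereal \<kappa> * FY_loss F ((\<chi> i. s) $ i) (q $ i)
        = ereal (\<gamma> i \<bullet> q $ i + \<kappa> * (g i + r - s \<bullet> q $ i))" for i
      unfolding FY_loss_def by (simp add: F_q 1)
    then have "S_N F \<kappa> \<gamma> (\<chi> i. s) q
        = ereal ((1 / ?N) * (\<Sum>i\<in>UNIV. \<gamma> i \<bullet> q $ i + \<kappa> * (g i + r - s \<bullet> q $ i)))"
      unfolding S_N_def by simp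
    also have "(\<Sum>i\<in>UNIV. \<gamma> i \<bullet> q $ i + \<kappa> * (g i + r - s \<bullet> q $ i))
        = (\<Sum>i\<in>UNIV. \<gamma> i \<bullet> q $ i) + \<kappa> * (\<Sum>i\<in>UNIV. g i) + ?N * (\<kappa> * r)
          - \<kappa> * (s \<bullet> (\<Sum>i\<in>UNIV. q $ i))"
      by (simp add: sum.distrib sum_subtractf sum_distrib_left[symmetric] inner_sum_right algebra_simps)
    finally show ?thesis
      unfolding 1 tuple_mean_def by (simp add: F_q field_simps)
  next
    case 2
    have "ereal \<kappa> * FY_loss F s (q $ i) = \<infinity>" for i
      using \<open>0 < \<kappa>\<close> unfolding FY_loss_def F_q 2 by simp
    then show ?thesis
      using \<open>0 < \<kappa>\<close> unfolding S_N_def 2 by (simp add: sum_Pinfty)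
  qed
qed

theorem Sbar_inf_eq_Sbar_formula:
  fixes F :: "real ^ 'y::finite \<Rightarrow> ereal" and q :: "(real ^ 'y) ^ 'n::finite"
    and \<gamma> :: "'n \<Rightarrow> real ^ 'y"
  assumes leg: "legendre_on (affine hull (dom_e F)) F" and "0 < \<kappa>" and q: "\<And>i. q $ i \<in> dom_e F"
  shows "Sbar_inf F \<kappa> \<gamma> q = Sbar_formula F \<kappa> \<gamma> q"
proof -
  have pr: "proper_fun F" and cv: "ext_convex_on UNIV F"
    using leg unfolding legendre_on_def by auto
  have m: "tuple_mean q \<in> dom_e F"
    using tuple_mean_in_convex[OF ext_convex_on_UNIV_convex_dom_e[OF cv pr] q] .
  obtain b where b: "F (tuple_mean q) = ereal b"
    using proper_fun_dom_e_eq_ereal[OF pr m] by blast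
  define c where "c = (1 / real CARD('n)) * (\<Sum>i\<in>UNIV. \<gamma> i \<bullet> q $ i)
    + \<kappa> * ((1 / real CARD('n)) * (\<Sum>i\<in>UNIV. real_of_ereal (F (q $ i))))"
  have "Sbar_inf F \<kappa> \<gamma> q = (INF s. ereal c + ereal \<kappa> * (conj_fun F s - ereal (s \<bullet> tuple_mean q)))"
    unfolding Sbar_inf_def consensus_eq_range c_def
    by (simp add: image_comp S_N_consensus[OF pr q \<open>0 < \<kappa>\<close>])
  also have "\<dots> = ereal c + ereal \<kappa> * (INF s. conj_fun F s - ereal (s \<bullet> tuple_mean q))"
    by (rule INF_ereal_affine) (simp_all add: \<open>0 < \<kappa>\<close>)
  also have "\<dots> = ereal c + ereal \<kappa> * - F (tuple_mean q)"
    by (simp only: legendre_on_INF_conj_fun[OF leg m])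
  also have "\<dots> = Sbar_formula F \<kappa> \<gamma> q"
    by (simp add: Sbar_formula_eq_ereal[OF pr q m] b c_def algebra_simps)
  finally show ?thesis .
qed

lemma ext_convex_on_Sbar_formula:
  fixes \<Psi> :: "real ^ 'y::finite \<Rightarrow> ereal" and \<gamma> :: "'n::finite \<Rightarrow> real ^ 'y"
  assumes pr: "proper_fun \<Psi>" and cv: "ext_convex_on UNIV \<Psi>" and "0 \<le> \<kappa>"
    and gap: "ext_convex_on {q. \<forall>i. q $ i \<in> dom_e \<Psi>} (jensen_gap \<Psi> :: (real ^ 'y) ^ 'n \<Rightarrow> ereal)"
  shows "ext_convex_on {q. \<forall>i. q $ i \<in> dom_e \<Psi>} (Sbar_formula \<Psi> \<kappa> \<gamma>)"
proof -
  let ?D = "{q :: (real ^ 'y) ^ 'n. \<forall>i. q $ i \<in> dom_e \<Psi>}"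
  define L where "L q = (1 / real CARD('n)) * (\<Sum>i\<in>UNIV. \<gamma> i \<bullet> q $ i)" for q :: "(real ^ 'y) ^ 'n"
  define J where "J q = (1 / real CARD('n)) * (\<Sum>i\<in>UNIV. real_of_ereal (\<Psi> (q $ i)))
    - real_of_ereal (\<Psi> (tuple_mean q))" for q :: "(real ^ 'y) ^ 'n"
  have m: "tuple_mean q \<in> dom_e \<Psi>" if "q \<in> ?D" for q
    using tuple_mean_in_convex[OF ext_convex_on_UNIV_convex_dom_e[OF cv pr]] that
    by blast
  have "ext_convex_on ?D (\<lambda>q. ereal (J q))"
    using gap by (subst ext_convex_on_cong[where g="jensen_gap \<Psi>"]) (auto simp: J_def jensen_gap_eq_ereal[OF pr] m)
  then have "convex_on ?D J"
    unfolding ext_convex_on_ereal_iff .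
  moreover have "convex_on ?D L"
  proof (rule linear_imp_convex_on)
    show "convex ?D"
      using gap unfolding ext_convex_on_def by blast
    show "linear L"
      by (rule linearI) (simp_all add: L_def inner_add_right sum.distrib sum_distrib_left algebra_simps)
  qed
  ultimately have "convex_on ?D (\<lambda>q. L q + \<kappa> * J q)"
    using \<open>0 \<le> \<kappa>\<close> by (intro convex_on_add convex_on_cmul)
  then have "ext_convex_on ?D (\<lambda>q. ereal (L q + \<kappa> * J q))"
    unfolding ext_convex_on_ereal_iff .
  then show ?thesis
    by (subst ext_convex_on_cong[where g="\<lambda>q. ereal (L q + \<kappa> * J q)"])
       (auto simp: L_def J_def Sbar_formula_eq_ereal[OF pr] m)
qed

lemma jensen_gap_nonneg:
  fixes \<Psi> :: "real ^ 'y::finite \<Rightarrow> ereal" and q :: "(real ^ 'y) ^ 'n::finite"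
  assumes pr: "proper_fun \<Psi>" and cv: "ext_convex_on UNIV \<Psi>" and q: "\<And>i. q $ i \<in> dom_e \<Psi>"
  shows "0 \<le> jensen_gap \<Psi> q"
proof -
  have g: "convex_on (dom_e \<Psi>) (\<lambda>x. real_of_ereal (\<Psi> x))"
    by (rule ext_convex_on_UNIV_convex_on_dom_e[OF cv pr])
  show ?thesis
    using convex_on_tuple_mean_le[OF g q]
    by (simp add: jensen_gap_eq_ereal[OF pr q tuple_mean_in_convex[OF convex_on_imp_convex[OF g] q]])
qed

theorem lemma1:
  fixes ypt :: "'y::finite \<Rightarrow> real ^ 'd"
    and c :: "real ^ 'd \<Rightarrow> 'x \<Rightarrow> real"
    and \<xi> :: "'n::finite \<Rightarrow> 'x"
    and \<kappa> :: real
    and \<Omega> :: "real ^ 'y \<Rightarrow> ereal"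
  assumes Y_inj: "inj ypt"
    and Y_extreme: "\<forall>y. ypt y \<notin> convex hull (ypt ` (UNIV - {y}))"
    and kappa_pos: "\<kappa> > 0"
    and \<Omega>_proper: "proper_fun \<Omega>"
    and \<Omega>_lsc: "lsc_fun \<Omega>"
    and \<Omega>_convex: "ext_convex_on UNIV \<Omega>"
    and \<Omega>_dom: "dom_e \<Omega> = prob_simplex"
    and \<Omega>_legendre: "legendre_on (affine hull prob_simplex) \<Omega>"
  shows
    "(\<forall>q. (\<forall>i. q $ i \<in> prob_simplex) \<longrightarrow>
        Sbar_inf \<Omega> \<kappa> (\<lambda>i. \<chi> y. c (ypt y) (\<xi> i)) q
          = Sbar_formula \<Omega> \<kappa> (\<lambda>i. \<chi> y. c (ypt y) (\<xi> i)) q)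
     \<and>
     (\<forall>\<Psi> :: real ^ 'y \<Rightarrow> ereal.
        legendre_on UNIV \<Psi> \<and> (\<forall>x. \<Omega> x = \<Psi> x + ind_fun prob_simplex x) \<longrightarrow>
          (\<forall>q. (\<forall>i. q $ i \<in> prob_simplex) \<longrightarrow>
              Sbar_inf \<Omega> \<kappa> (\<lambda>i. \<chi> y. c (ypt y) (\<xi> i)) q
                = Sbar_formula \<Psi> \<kappa> (\<lambda>i. \<chi> y. c (ypt y) (\<xi> i)) q)
        \<and> (ext_convex_on {q. \<forall>i. q $ i \<in> dom_e \<Psi>} (jensen_gap \<Psi> :: (real ^ 'y) ^ 'n \<Rightarrow> ereal) \<longrightarrow>
              ext_convex_on {q. \<forall>i. q $ i \<in> dom_e \<Psi>}
                (Sbar_formula \<Psi> \<kappa> (\<lambda>i. \<chi> y. c (ypt y) (\<xi> i))))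
        \<and> (\<forall>q :: (real ^ 'y) ^ 'n. (\<forall>i. q $ i \<in> dom_e \<Psi>) \<longrightarrow> jensen_gap \<Psi> q \<ge> 0))"
proof -
  \<comment> \<open>Nothing about the support points \<open>ypt\<close> or the cost \<open>c\<close> is needed: the identities hold for any cost vectors.\<close>
  let ?\<gamma> = "\<lambda>i. \<chi> y. c (ypt y) (\<xi> i)"
  have \<Omega>_formula: "Sbar_inf \<Omega> \<kappa> ?\<gamma> q = Sbar_formula \<Omega> \<kappa> ?\<gamma> q"
    if "\<forall>i. q $ i \<in> prob_simplex" for q :: "(real ^ 'y) ^ 'n"
    using Sbar_inf_eq_Sbar_formula[of \<Omega> \<kappa> q] \<Omega>_legendre \<Omega>_dom kappa_pos that by simp
  have convex_simplex: "convex (prob_simplex :: (real ^ 'y) set)"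
    using ext_convex_on_UNIV_convex_dom_e[OF \<Omega>_convex \<Omega>_proper] \<Omega>_dom by simp
  have \<Psi>_formula: "Sbar_inf \<Omega> \<kappa> ?\<gamma> q = Sbar_formula \<Psi> \<kappa> ?\<gamma> q"
    if \<Omega>_\<Psi>: "\<forall>x. \<Omega> x = \<Psi> x + ind_fun prob_simplex x" and q: "\<forall>i. q $ i \<in> prob_simplex" for \<Psi> q
  proof -
    have "tuple_mean q \<in> prob_simplex"
      using tuple_mean_in_convex[OF convex_simplex] q by blast
    then have "Sbar_formula \<Omega> \<kappa> ?\<gamma> q = Sbar_formula \<Psi> \<kappa> ?\<gamma> q"
      using q \<Omega>_\<Psi> by (intro Sbar_formula_cong) (simp_all add: ind_fun_def)
    then show ?thesis
      using \<Omega>_formula[OF q] by simp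
  qed
  show ?thesis
  proof (intro conjI allI impI; (elim conjE)?)
    show "Sbar_inf \<Omega> \<kappa> ?\<gamma> q = Sbar_formula \<Omega> \<kappa> ?\<gamma> q" if "\<forall>i. q $ i \<in> prob_simplex" for q
      using \<Omega>_formula[OF that] .
  next
    fix \<Psi> :: "real ^ 'y \<Rightarrow> ereal"
    assume "legendre_on UNIV \<Psi>" and \<Omega>_\<Psi>: "\<forall>x. \<Omega> x = \<Psi> x + ind_fun prob_simplex x"
    then have pr: "proper_fun \<Psi>" and cv: "ext_convex_on UNIV \<Psi>"
      unfolding legendre_on_def by auto
    show "Sbar_inf \<Omega> \<kappa> ?\<gamma> q = Sbar_formula \<Psi> \<kappa> ?\<gamma> q" if "\<forall>i. q $ i \<in> prob_simplex" for q
      using \<Psi>_formula[OF \<Omega>_\<Psi> that] .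
    show "ext_convex_on {q. \<forall>i. q $ i \<in> dom_e \<Psi>} (Sbar_formula \<Psi> \<kappa> ?\<gamma>)"
      if "ext_convex_on {q. \<forall>i. q $ i \<in> dom_e \<Psi>} (jensen_gap \<Psi> :: (real ^ 'y) ^ 'n \<Rightarrow> ereal)"
      using ext_convex_on_Sbar_formula[OF pr cv _ that] kappa_pos by simp
    show "0 \<le> jensen_gap \<Psi> q" if "\<forall>i. q $ i \<in> dom_e \<Psi>" for q :: "(real ^ 'y) ^ 'n"
      using jensen_gap_nonneg[OF pr cv] that by blast
  qed
qed

end
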